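(* Let $G$ be an unweighted undirected $n$-vertex graph, let $A$ be a $\beta$-additive clustering-based spanner of $G$ with clustering $\mathcal{C}$ and center map $\mathrm{cnt}$, and let $M$ be an $\alpha$-multiplicative EFT spanner of $G$. Let $H$ be the graph returned by Algorithm 2 (described in the context). Then $H$ has $O(|E(A)|+|E(M)|+n+|\mathcal{C}|^2)$ edges, and $H$ is a $(2\beta+\max\{2,\alpha-3\})$-additive EFT spanner of $G$, i.e. for every $e\in E(G)$ and all $s,t$ connected in $G-e$, $d_{H-e}(s,t)\le d_{G-e}(s,t)+2\beta+\max\{2,\alpha-3\}$.
   Context: $d_X$ is shortest-path distance in $X$; $|\pi|$ is the number of edges of path $\pi$. An $\alpha$-multiplicative EFT spanner is a subgraph $M$ with $d_{M-e}(s,t)\le\alpha\,d_{G-e}(s,t)$ for all edges $e$ and vertices $s,t$. A clustering of $G$ is a partition $\mathcal{C}$ of a subset of $V(G)$ into clusters; each cluster $C$ has a designated center vertex in $C$, and for a clustered vertex $v$, $\mathrm{cnt}(v)$ is the center of its cluster; every non-center clustered vertex is adjacent in $G$ to its center. Unclustered vertices are those in no cluster. A $\beta$-additive spanner $A$ (i.e. $d_A(u,v)\le d_G(u,v)+\beta$ for all $u,v$) is clustering-based with clustering $\mathcal{C}$ if: (i) $A$ contains all edges of $G$ incident to unclustered vertices; (ii) $A$ contains every edge $(v,\mathrm{cnt}(v))$ for clustered $v\neq\mathrm{cnt}(v)$; (iii) for all $u,v\in V(G)$ with $v$ clustered there is a path $\tilde\pi(u,v)$ in $A$ satisfying one of: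 (P1) $|\tilde\pi(u,v)|\le d_G(u,v)+\beta-2$; (P2) $|\tilde\pi(u,v)|=d_G(u,v)+\beta-1$ and either $v=\mathrm{cnt}(v)$ or the last edge of $\tilde\pi(u,v)$ is $(\mathrm{cnt}(v),v)$; (P3) $|\tilde\pi(u,v)|=d_G(u,v)+\beta$, $v\ne\mathrm{cnt}(v)$, and the last edge of $\tilde\pi(u,v)$ is $(\mathrm{cnt}(v),v)$. For clusters $C,C'$ let $\delta(C,C')$ be the set of edges of $G$ with one endpoint in $C$ and the other in $C'$. Algorithm 2: start with $E'=\emptyset$. For every cluster $C$ and every $v\in C$, if there is an edge $(v,x)\in E(G)$ with $x\in C\setminus\{\mathrm{cnt}(v)\}$, add one such edge to $E'$. For every pair of distinct clusters $C,C'$: if $\delta(C,C')$ contains two vertex-disjoint edges, add two such edges to $E'$; else if it contains two distinct edges, add two such edges; otherwise add all of $\delta(C,C')$ (at most one edge). Return $H=(V(G),E'\cup E(M)\cup E(A))$. *)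

theory Defs
  imports Main "HOL-Library.Extended_Nat"
begin

text \<open>Unweighted undirected simple graphs: a finite vertex set V and a set E of
  2-element subsets of V (edges). Subgraphs on the same vertex set are given by edge sets.\<close>

definition graph :: "'a set \<Rightarrow> 'a set set \<Rightarrow> bool" where
  "graph V E \<longleftrightarrow> finite V \<and> E \<subseteq> {{u, v} | u v. u \<in> V \<and> v \<in> V \<and> u \<noteq> v}"

definition is_path :: "'a set set \<Rightarrow> 'a list \<Rightarrow> 'a \<Rightarrow> 'a \<Rightarrow> bool" where
  "is_path F p u v \<longleftrightarrow> p \<noteq> [] \<and> hd p = u \<and> last p = v \<and>
     (\<forall>i. Suc i < length p \<longrightarrow> {p ! i, p ! Suc i} \<in> F)"

definition plen :: "'a list \<Rightarrow> nat" where
  "plen p = length p - 1"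

definition gdist :: "'a set set \<Rightarrow> 'a \<Rightarrow> 'a \<Rightarrow> enat" where
  "gdist F u v = (INF p \<in> {p. is_path F p u v}. enat (plen p))"

definition last_edge_from :: "'a list \<Rightarrow> 'a \<Rightarrow> bool" where
  "last_edge_from p x \<longleftrightarrow> length p \<ge> 2 \<and> p ! (length p - 2) = x"

definition additive_spanner :: "'a set set \<Rightarrow> 'a set set \<Rightarrow> nat \<Rightarrow> bool" where
  "additive_spanner E A \<beta> \<longleftrightarrow> A \<subseteq> E \<and>
     (\<forall>u v. gdist A u v \<le> gdist E u v + enat \<beta>)"

definition mult_EFT_spanner :: "'a set \<Rightarrow> 'a set set \<Rightarrow> 'a set set \<Rightarrow> real \<Rightarrow> bool" where
  "mult_EFT_spanner V E M \<alpha> \<longleftrightarrow> M \<subseteq> E \<and>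
     (\<forall>e\<in>E. \<forall>s\<in>V. \<forall>t\<in>V. gdist (E - {e}) s t \<noteq> \<infinity> \<longrightarrow>
        gdist (M - {e}) s t \<noteq> \<infinity> \<and>
        real (the_enat (gdist (M - {e}) s t)) \<le> \<alpha> * real (the_enat (gdist (E - {e}) s t)))"

definition clustering :: "'a set \<Rightarrow> 'a set set \<Rightarrow> 'a set set \<Rightarrow> ('a \<Rightarrow> 'a) \<Rightarrow> bool" where
  "clustering V E \<C> cnt \<longleftrightarrow>
     (\<forall>X\<in>\<C>. X \<noteq> {} \<and> X \<subseteq> V) \<and>
     (\<forall>X\<in>\<C>. \<forall>Y\<in>\<C>. X \<noteq> Y \<longrightarrow> X \<inter> Y = {}) \<and>
     (\<forall>X\<in>\<C>. \<forall>v\<in>X. cnt v \<in> X) \<and>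
     (\<forall>X\<in>\<C>. \<forall>u\<in>X. \<forall>v\<in>X. cnt u = cnt v) \<and>
     (\<forall>v\<in>\<Union>\<C>. v \<noteq> cnt v \<longrightarrow> {v, cnt v} \<in> E)"

definition clustering_based_spanner ::
  "'a set \<Rightarrow> 'a set set \<Rightarrow> 'a set set \<Rightarrow> nat \<Rightarrow> 'a set set \<Rightarrow> ('a \<Rightarrow> 'a) \<Rightarrow> bool" where
  "clustering_based_spanner V E A \<beta> \<C> cnt \<longleftrightarrow>
     additive_spanner E A \<beta> \<and> clustering V E \<C> cnt \<and>
     (\<forall>e\<in>E. (\<exists>u\<in>e. u \<notin> \<Union>\<C>) \<longrightarrow> e \<in> A) \<and>
     (\<forall>v\<in>\<Union>\<C>. v \<noteq> cnt v \<longrightarrow> {v, cnt v} \<in> A) \<and>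
     (\<forall>u\<in>V. \<forall>v\<in>\<Union>\<C>. gdist E u v \<noteq> \<infinity> \<longrightarrow>
        (\<exists>p. is_path A p u v \<and>
          (let d = int (the_enat (gdist E u v)); l = int (plen p) in
            l \<le> d + int \<beta> - 2
          \<or> (l = d + int \<beta> - 1 \<and> (v = cnt v \<or> last_edge_from p (cnt v)))
          \<or> (l = d + int \<beta> \<and> v \<noteq> cnt v \<and> last_edge_from p (cnt v)))))"

definition delta :: "'a set set \<Rightarrow> 'a set \<Rightarrow> 'a set \<Rightarrow> 'a set set" where
  "delta E X Y = {e \<in> E. \<exists>x\<in>X. \<exists>y\<in>Y. e = {x, y}}"

text \<open>Possible outputs E' of the (nondeterministic) first part of Algorithm 2:
  S v is the (at most one) intra-cluster edge chosen for v, and D X Y the edges chosen for the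
  unordered pair of distinct clusters {X, Y}.\<close>

definition alg2_edges :: "'a set set \<Rightarrow> 'a set set \<Rightarrow> ('a \<Rightarrow> 'a) \<Rightarrow> 'a set set \<Rightarrow> bool" where
  "alg2_edges E \<C> cnt E' \<longleftrightarrow>
    (\<exists>S D.
      (\<forall>X\<in>\<C>. \<forall>v\<in>X.
         let cand = {{v, x} | x. x \<in> X - {cnt v} \<and> {v, x} \<in> E} in
         (cand = {} \<longrightarrow> S v = {}) \<and> (cand \<noteq> {} \<longrightarrow> (\<exists>e\<in>cand. S v = {e}))) \<and>
      (\<forall>X\<in>\<C>. \<forall>Y\<in>\<C>. X \<noteq> Y \<longrightarrow> D X Y = D Y X \<and>
         (let \<delta> = delta E X Y in
          if (\<exists>e1\<in>\<delta>. \<exists>e2\<in>\<delta>. e1 \<inter> e2 = {})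
          then (\<exists>e1\<in>\<delta>. \<exists>e2\<in>\<delta>. e1 \<inter> e2 = {} \<and> D X Y = {e1, e2})
          else if (\<exists>e1\<in>\<delta>. \<exists>e2\<in>\<delta>. e1 \<noteq> e2)
          then (\<exists>e1\<in>\<delta>. \<exists>e2\<in>\<delta>. e1 \<noteq> e2 \<and> D X Y = {e1, e2})
          else D X Y = \<delta>)) \<and>
      E' = (\<Union>X\<in>\<C>. \<Union>v\<in>X. S v) \<union> (\<Union>{D X Y | X Y. X \<in> \<C> \<and> Y \<in> \<C> \<and> X \<noteq> Y}))"

definition alg2_output ::
  "'a set set \<Rightarrow> 'a set set \<Rightarrow> ('a \<Rightarrow> 'a) \<Rightarrow> 'a set set \<Rightarrow> 'a set set \<Rightarrow> 'a set set \<Rightarrow> bool" where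
  "alg2_output E \<C> cnt M A H \<longleftrightarrow> (\<exists>E'. alg2_edges E \<C> cnt E' \<and> H = E' \<union> M \<union> A)"

end

theory Submission
  imports Defs
begin

text \<open>
  Size: Algorithm 2 adds at most one edge per clustered vertex and at most two per pair of
  clusters.

  Stretch: fix the faulty edge \<open>e\<close> and a path \<open>P\<close> from \<open>s\<close> to \<open>t\<close> in \<open>G - e\<close>. For a vertex \<open>x\<close>,
  the path from \<open>s\<close> to \<open>x\<close> guaranteed by \<open>A\<close> either avoids \<open>e\<close> (a safe route, which near a
  clustered \<open>x\<close> keeps the slack of (P1)--(P3)), or it can be cut at \<open>e\<close> into two pieces that
  avoid \<open>e\<close> (a crossing route). Let \<open>x\<close> be the last vertex of \<open>P\<close> that \<open>s\<close> reaches safely and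
  \<open>x'\<close> its successor. If \<open>t\<close> also reaches \<open>x'\<close> by a crossing route, the two crossing routes
  glue together around \<open>e\<close>. Otherwise \<open>s\<close> and \<open>t\<close> reach the ends of the edge \<open>x x'\<close> safely,
  and that edge is bridged after the fault either by \<open>A\<close>, or by \<open>M\<close> within \<open>\<alpha>\<close> (affordable when
  one route has slack 2), or through the centers of \<open>x\<close> and \<open>x'\<close>, which the edges stored by
  Algorithm 2 keep at distance at most 3.
\<close>

section \<open>Paths and distances\<close>

lemma is_path_singleton [simp]: "is_path F [u] u u"
  by (simp add: is_path_def)

lemma is_path_mono: "is_path F p u v \<Longrightarrow> F \<subseteq> F' \<Longrightarrow> is_path F' p u v"
  by (auto simp: is_path_def)

lemma is_path_Cons_Cons:
  "is_path F (x # y # p) u v \<longleftrightarrow> x = u \<and> {x, y} \<in> F \<and> is_path F (y # p) y v"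
proof -
  have split: "(\<forall>i. P i) \<longleftrightarrow> P 0 \<and> (\<forall>i. P (Suc i))" for P :: "nat \<Rightarrow> bool"
    by (metis not0_implies_Suc)
  show ?thesis
    unfolding is_path_def by (subst split) auto
qed

lemma is_path_edge: "{u, v} \<in> F \<Longrightarrow> is_path F [u, v] u v"
  by (simp add: is_path_Cons_Cons)

lemma is_path_append:
  assumes "is_path F p u v" "is_path F q v w"
  shows "is_path F (p @ tl q) u w \<and> plen (p @ tl q) = plen p + plen q"
  using assms
proof (induction p arbitrary: u)
  case Nil
  then show ?case by (simp add: is_path_def)
next
  case (Cons x p)
  show ?case
  proof (cases p)
    case Nil
    then have "x = u" "u = v" using Cons.prems by (auto simp: is_path_def)
    then show ?thesis using Cons.prems Nil by (cases q) (auto simp: plen_def is_path_def)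
  next
    case (Cons y p')
    then have "x = u" "{x, y} \<in> F" "is_path F p y v"
      using Cons.prems(1) is_path_Cons_Cons by fastforce+
    moreover note Cons.IH[OF \<open>is_path F p y v\<close> Cons.prems(2)]
    ultimately show ?thesis using Cons by (auto simp: is_path_Cons_Cons plen_def)
  qed
qed

lemma is_path_rev: "is_path F p u v \<Longrightarrow> is_path F (rev p) v u"
  unfolding is_path_def
proof (intro conjI allI impI)
  assume p: "p \<noteq> [] \<and> hd p = u \<and> last p = v \<and> (\<forall>i. Suc i < length p \<longrightarrow> {p ! i, p ! Suc i} \<in> F)"
  then show "rev p \<noteq> []" "hd (rev p) = v" "last (rev p) = u" by (auto simp: hd_rev last_rev)
  fix i assume i: "Suc i < length (rev p)"
  let ?j = "length p - Suc (Suc i)"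
  have "{p ! ?j, p ! Suc ?j} \<in> F" using p i by auto
  moreover have "rev p ! i = p ! Suc ?j" "rev p ! Suc i = p ! ?j"
    using i by (auto simp: rev_nth Suc_diff_Suc)
  ultimately show "{rev p ! i, rev p ! Suc i} \<in> F" by (simp add: insert_commute)
qed

lemma plen_rev [simp]: "plen (rev p) = plen p"
  by (simp add: plen_def)

lemma is_path_take:
  assumes "is_path F p u v" "j < length p"
  shows "is_path F (take (Suc j) p) u (p ! j) \<and> plen (take (Suc j) p) = j"
proof -
  have "last (take (Suc j) p) = p ! j" using assms(2) by (subst last_conv_nth) auto
  then show ?thesis using assms by (auto simp: is_path_def plen_def hd_take)
qed

lemma is_path_drop:
  assumes "is_path F p u v" "j < length p"
  shows "is_path F (drop j p) (p ! j) v \<and> plen (drop j p) = plen p - j"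
proof -
  have "{drop j p ! i, drop j p ! Suc i} \<in> F" if "Suc i < length (drop j p)" for i
  proof -
    have "Suc (j + i) < length p" using that by simp
    then have "{p ! (j + i), p ! Suc (j + i)} \<in> F" using assms(1) unfolding is_path_def by blast
    then show ?thesis using that by simp
  qed
  then show ?thesis using assms by (auto simp: is_path_def plen_def hd_drop_conv_nth)
qed

lemma is_path_butlast:
  assumes p: "is_path F p u v" and last: "last_edge_from p c"
  shows "is_path F (butlast p) u c \<and> plen (butlast p) + 1 = plen p \<and> {c, v} \<in> F"
proof -
  define j where "j = length p - 2"
  have j: "Suc j < length p" "Suc (Suc j) = length p" "p ! j = c"
    using last unfolding last_edge_from_def j_def by auto
  have "length p - 1 = Suc j" using j(2) by simp
  then have "butlast p = take (Suc j) p" by (simp add: butlast_conv_take)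
  moreover have "p ! Suc j = v" using p \<open>length p - 1 = Suc j\<close> by (auto simp: is_path_def last_conv_nth)
  moreover have "{p ! j, p ! Suc j} \<in> F" using p j unfolding is_path_def by blast
  ultimately show ?thesis using is_path_take[OF p, of j] j by (simp add: plen_def)
qed

lemma gdist_le_plen: "is_path F p u v \<Longrightarrow> gdist F u v \<le> enat (plen p)"
  unfolding gdist_def by (rule INF_lower) auto

lemma gdist_attained:
  assumes "gdist F u v \<noteq> \<infinity>"
  obtains p where "is_path F p u v" "gdist F u v = enat (plen p)"
proof -
  let ?T = "(\<lambda>p. enat (plen p)) ` {p. is_path F p u v}"
  have "?T \<noteq> {}"
  proof
    assume "?T = {}"
    then have "gdist F u v = Inf {}" unfolding gdist_def by simp
    then show False using assms by (simp add: Inf_enat_def)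
  qed
  then have "gdist F u v \<in> ?T" unfolding gdist_def Inf_enat_def by (auto intro: LeastI)
  then show ?thesis using that by blast
qed

lemma gdist_edge:
  assumes "{u, v} \<in> F" "u \<noteq> v"
  shows "gdist F u v = 1"
proof -
  have le: "gdist F u v \<le> 1"
    using gdist_le_plen[OF is_path_edge[OF assms(1)]] by (simp add: plen_def one_enat_def)
  then have "gdist F u v \<noteq> \<infinity>" by (metis infinity_ileE one_enat_def)
  then obtain p where p: "is_path F p u v" "gdist F u v = enat (plen p)" by (rule gdist_attained)
  have "plen p \<noteq> 0"
  proof
    assume "plen p = 0"
    then obtain w where "p = [w]" using p(1) unfolding is_path_def plen_def by (cases p) auto
    then show False using p(1) assms(2) unfolding is_path_def by auto
  qed
  then show ?thesis using le p(2) by (simp add: one_enat_def)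
qed

lemma is_path_nth_in_vertices:
  assumes "graph V E" "F \<subseteq> E" "is_path F p u v" "u \<in> V" "j < length p"
  shows "p ! j \<in> V"
proof (cases j)
  case 0
  then show ?thesis using assms(3,4) unfolding is_path_def by (metis hd_conv_nth)
next
  case (Suc i)
  then have "{p ! i, p ! j} \<in> E" using assms(2,3,5) unfolding is_path_def by blast
  then show ?thesis using assms(1) unfolding graph_def by (auto simp: doubleton_eq_iff)
qed

text \<open>Distance bounds are integers so that expressions such as \<open>d + \<beta> - 2\<close> are not truncated.\<close>

definition reach_le :: "'a set set \<Rightarrow> 'a \<Rightarrow> 'a \<Rightarrow> int \<Rightarrow> bool" where
  "reach_le F u v k \<longleftrightarrow> (\<exists>p. is_path F p u v \<and> int (plen p) \<le> k)"

lemma reach_le_path: "is_path F p u v \<Longrightarrow> reach_le F u v (int (plen p))"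
  unfolding reach_le_def by auto

lemma reach_le_refl: "0 \<le> k \<Longrightarrow> reach_le F u u k"
  unfolding reach_le_def by (rule exI[of _ "[u]"]) (simp add: plen_def)

lemma reach_le_nonneg: "reach_le F u v k \<Longrightarrow> 0 \<le> k"
  unfolding reach_le_def by auto

lemma reach_le_edge: "{u, v} \<in> F \<Longrightarrow> reach_le F u v 1"
  using reach_le_path[OF is_path_edge] by (simp add: plen_def)

lemma reach_le_mono: "reach_le F u v k \<Longrightarrow> F \<subseteq> F' \<Longrightarrow> k \<le> k' \<Longrightarrow> reach_le F' u v k'"
proof -
  assume "reach_le F u v k" "F \<subseteq> F'" "k \<le> k'"
  then obtain p where "is_path F p u v" "int (plen p) \<le> k" unfolding reach_le_def by blast
  then show ?thesis unfolding reach_le_def using \<open>F \<subseteq> F'\<close> \<open>k \<le> k'\<close>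
    by (intro exI[of _ p]) (simp add: is_path_mono)
qed

lemma reach_le_le: "reach_le F u v k \<Longrightarrow> k \<le> k' \<Longrightarrow> reach_le F u v k'"
  by (erule reach_le_mono) auto

lemma reach_le_trans: "reach_le F u v k \<Longrightarrow> reach_le F v w l \<Longrightarrow> reach_le F u w (k + l)"
proof -
  assume "reach_le F u v k" "reach_le F v w l"
  then obtain p q where "is_path F p u v" "int (plen p) \<le> k" "is_path F q v w" "int (plen q) \<le> l"
    unfolding reach_le_def by blast
  then show ?thesis unfolding reach_le_def using is_path_append[of F p u v q w]
    by (intro exI[of _ "p @ tl q"]) simp
qed

lemma reach_le_sym: "reach_le F u v k \<Longrightarrow> reach_le F v u k"
  unfolding reach_le_def by (metis is_path_rev plen_rev)

lemma reach_le_iff_gdist: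
  "reach_le F u v k \<longleftrightarrow> gdist F u v \<noteq> \<infinity> \<and> int (the_enat (gdist F u v)) \<le> k"
proof
  assume "reach_le F u v k"
  then obtain p where "is_path F p u v" "int (plen p) \<le> k" unfolding reach_le_def by blast
  moreover from \<open>is_path F p u v\<close> have "gdist F u v \<le> enat (plen p)" by (rule gdist_le_plen)
  ultimately show "gdist F u v \<noteq> \<infinity> \<and> int (the_enat (gdist F u v)) \<le> k"
    by (cases "gdist F u v") auto
next
  assume "gdist F u v \<noteq> \<infinity> \<and> int (the_enat (gdist F u v)) \<le> k"
  then show "reach_le F u v k"
    using gdist_attained[of F u v] unfolding reach_le_def by (metis the_enat.simps)
qed

lemma reach_le_path_nth:
  assumes "is_path F p u v" "j < length p"
  shows "reach_le F u (p ! j) j" "reach_le F (p ! j) v (int (plen p - j))"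
  using reach_le_path[of F "take (Suc j) p"] reach_le_path[of F "drop j p"]
    is_path_take[OF assms] is_path_drop[OF assms] by simp_all

text \<open>A path that uses \<open>e\<close> is cut at its first and last use of \<open>e\<close>; if it enters and leaves
  \<open>e\<close> at the same endpoint, it used \<open>e\<close> twice.\<close>

lemma path_split_at_edge:
  assumes "is_path F p u v" "e = {a, b}" "a \<noteq> b"
  shows "is_path (F - {e}) p u v \<or>
    (\<exists>y z k1 k2. y \<in> e \<and> z \<in> e \<and> reach_le (F - {e}) u y k1 \<and> reach_le (F - {e}) z v k2 \<and>
        k1 + k2 + 1 \<le> int (plen p) \<and> (y = z \<longrightarrow> k1 + k2 + 2 \<le> int (plen p)))"
  using assms(1)
proof (induction p arbitrary: u)
  case Nil
  then show ?case by (simp add: is_path_def)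
next
  case (Cons x p)
  show ?case
  proof (cases p)
    case Nil
    then show ?thesis using Cons.prems by (auto simp: is_path_def)
  next
    case (Cons y p')
    then have x: "x = u" "{x, y} \<in> F" and p: "is_path F p y v"
      using Cons.prems is_path_Cons_Cons by fastforce+
    have len: "plen (x # p) = plen p + 1" using Cons by (simp add: plen_def)
    consider "is_path (F - {e}) p y v"
      | y' z k1 k2 where "y' \<in> e" "z \<in> e" "reach_le (F - {e}) y y' k1" "reach_le (F - {e}) z v k2"
          "k1 + k2 + 1 \<le> int (plen p)" "y' = z \<longrightarrow> k1 + k2 + 2 \<le> int (plen p)"
      using Cons.IH[OF p] by blast
    then show ?thesis
    proof cases
      case 1
      show ?thesis
      proof (cases "{x, y} = e")
        case True
        then have "x \<in> e" "y \<in> e" "x \<noteq> y" using assms(2,3) by (auto simp: doubleton_eq_iff)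
        moreover have "reach_le (F - {e}) u x 0" using x by (simp add: reach_le_refl)
        moreover note reach_le_path[OF 1]
        ultimately show ?thesis using len
          by (intro disjI2 exI[of _ x] exI[of _ y] exI[of _ 0] exI[of _ "int (plen p)"]) simp
      next
        case False
        then show ?thesis using 1 x \<open>p = y # p'\<close> by (simp add: is_path_Cons_Cons)
      qed
    next
      case (2 y' z k1 k2)
      show ?thesis
      proof (cases "{x, y} = e")
        case True
        then have "x \<in> e" using assms(2) by blast
        moreover have "reach_le (F - {e}) u x 0" using x by (simp add: reach_le_refl)
        moreover have "0 \<le> k1" using 2(3) by (rule reach_le_nonneg)
        then have "0 + k2 + 1 \<le> int (plen (x # p))" "0 + k2 + 2 \<le> int (plen (x # p))"
          using 2(5) len by linarith+
        ultimately show ?thesis using 2(2,4) by blast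
      next
        case False
        then have "{u, y} \<in> F - {e}" using x by simp
        then have "reach_le (F - {e}) u y' (1 + k1)" using reach_le_trans[OF reach_le_edge 2(3)] by blast
        moreover have "1 + k1 + k2 + 1 \<le> int (plen (x # p))" "y' = z \<longrightarrow> 1 + k1 + k2 + 2 \<le> int (plen (x # p))"
          using 2(5,6) len by auto
        ultimately show ?thesis using 2(1,2,4) by blast
      qed
    qed
  qed
qed

lemma path_avoids_or_crosses:
  assumes "is_path F p u v" "e = {a, b}" "a \<noteq> b"
  shows "is_path (F - {e}) p u v \<or> reach_le (F - {e}) u v (int (plen p) - 2) \<or>
    (\<exists>y z k1 k2. y \<in> e \<and> z \<in> e \<and> y \<noteq> z \<and> reach_le (F - {e}) u y k1 \<and>
       reach_le (F - {e}) z v k2 \<and> k1 + k2 + 1 \<le> int (plen p))"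
  using path_split_at_edge[OF assms]
proof (elim disjE exE conjE)
  fix y z k1 k2
  assume *: "y \<in> e" "z \<in> e" "reach_le (F - {e}) u y k1" "reach_le (F - {e}) z v k2"
    "k1 + k2 + 1 \<le> int (plen p)" "y = z \<longrightarrow> k1 + k2 + 2 \<le> int (plen p)"
  show ?thesis
  proof (cases "y = z")
    case True
    then have "reach_le (F - {e}) u v (k1 + k2)" using *(3,4) by (simp add: reach_le_trans)
    moreover have "k1 + k2 \<le> int (plen p) - 2" using *(6) True by simp
    ultimately have "reach_le (F - {e}) u v (int (plen p) - 2)" by (rule reach_le_le)
    then show ?thesis by blast
  next
    case False
    then show ?thesis using * by blast
  qed
qed blast

section \<open>Size of the output of Algorithm 2\<close>

definition pair_choice :: "'a set set \<Rightarrow> 'a set set \<Rightarrow> bool" where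
  "pair_choice \<delta> D \<longleftrightarrow>
     (if \<exists>e1\<in>\<delta>. \<exists>e2\<in>\<delta>. e1 \<inter> e2 = {} then \<exists>e1\<in>\<delta>. \<exists>e2\<in>\<delta>. e1 \<inter> e2 = {} \<and> D = {e1, e2}
      else if \<exists>e1\<in>\<delta>. \<exists>e2\<in>\<delta>. e1 \<noteq> e2 then \<exists>e1\<in>\<delta>. \<exists>e2\<in>\<delta>. e1 \<noteq> e2 \<and> D = {e1, e2}
      else D = \<delta>)"

lemma alg2_edges_choice:
  assumes "alg2_edges E \<C> cnt E'"
  shows "\<exists>S D. (\<forall>X\<in>\<C>. \<forall>v\<in>X. card (S v) \<le> 1) \<and>
    (\<forall>X\<in>\<C>. \<forall>Y\<in>\<C>. X \<noteq> Y \<longrightarrow> pair_choice (delta E X Y) (D X Y)) \<and>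
    E' = (\<Union>X\<in>\<C>. \<Union>v\<in>X. S v) \<union> \<Union>{D X Y | X Y. X \<in> \<C> \<and> Y \<in> \<C> \<and> X \<noteq> Y}"
proof -
  obtain S D where
    S: "\<forall>X\<in>\<C>. \<forall>v\<in>X. let cand = {{v, x} | x. x \<in> X - {cnt v} \<and> {v, x} \<in> E} in
         (cand = {} \<longrightarrow> S v = {}) \<and> (cand \<noteq> {} \<longrightarrow> (\<exists>e\<in>cand. S v = {e}))" and
    D: "\<forall>X\<in>\<C>. \<forall>Y\<in>\<C>. X \<noteq> Y \<longrightarrow> D X Y = D Y X \<and>
         (let \<delta> = delta E X Y in
          if (\<exists>e1\<in>\<delta>. \<exists>e2\<in>\<delta>. e1 \<inter> e2 = {})
          then (\<exists>e1\<in>\<delta>. \<exists>e2\<in>\<delta>. e1 \<inter> e2 = {} \<and> D X Y = {e1, e2})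
          else if (\<exists>e1\<in>\<delta>. \<exists>e2\<in>\<delta>. e1 \<noteq> e2)
          then (\<exists>e1\<in>\<delta>. \<exists>e2\<in>\<delta>. e1 \<noteq> e2 \<and> D X Y = {e1, e2})
          else D X Y = \<delta>)" and
    E': "E' = (\<Union>X\<in>\<C>. \<Union>v\<in>X. S v) \<union> \<Union>{D X Y | X Y. X \<in> \<C> \<and> Y \<in> \<C> \<and> X \<noteq> Y}"
    using assms unfolding alg2_edges_def by blast
  have "card (S v) \<le> 1" if "X \<in> \<C>" "v \<in> X" for X v
  proof -
    have "S v = {} \<or> (\<exists>f. S v = {f})" using S[rule_format, OF that] unfolding Let_def by blast
    then show ?thesis by auto
  qed
  moreover have "pair_choice (delta E X Y) (D X Y)" if "X \<in> \<C>" "Y \<in> \<C>" "X \<noteq> Y" for X Y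
    using conjunct2[OF D[rule_format, OF that]] unfolding pair_choice_def Let_def .
  ultimately show ?thesis using E' by blast
qed

lemma pair_choice_card:
  assumes "finite \<delta>" "pair_choice \<delta> D"
  shows "card D \<le> 2"
proof -
  have pair: "card {e1, e2} \<le> 2" for e1 e2 :: "'a set" by (simp add: card_insert_le_m1)
  show ?thesis
  proof (cases "\<exists>e1\<in>\<delta>. \<exists>e2\<in>\<delta>. e1 \<noteq> e2")
    case True
    then have "\<exists>e1 e2. D = {e1, e2}" using assms(2) unfolding pair_choice_def by (auto split: if_splits)
    then show ?thesis using pair by blast
  next
    case False
    then have "D = \<delta>" "card \<delta> \<le> 1"
      using assms card_le_Suc0_iff_eq[OF assms(1)] unfolding pair_choice_def by (auto split: if_splits)
    then show ?thesis by simp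
  qed
qed

lemma pair_choice_cases:
  assumes "pair_choice \<delta> D" "{} \<notin> \<delta>" "f \<in> \<delta>"
  shows "D \<subseteq> \<delta> \<and> (f \<in> D \<or> (\<exists>e1\<in>D. \<exists>e2\<in>D. e1 \<noteq> e2 \<and> (e1 \<inter> e2 = {} \<or> f \<inter> e1 \<noteq> {} \<and> f \<inter> e2 \<noteq> {})))"
proof (cases "\<exists>e1\<in>\<delta>. \<exists>e2\<in>\<delta>. e1 \<inter> e2 = {}")
  case True
  then obtain e1 e2 where "e1 \<in> \<delta>" "e2 \<in> \<delta>" "e1 \<inter> e2 = {}" "D = {e1, e2}"
    using assms(1) unfolding pair_choice_def by auto
  moreover from this have "e1 \<noteq> e2" using assms(2) by auto
  ultimately show ?thesis by blast
next
  case False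
  then show ?thesis using assms unfolding pair_choice_def by (auto split: if_splits)
qed

lemma graph_finite_edges: "graph V E \<Longrightarrow> finite E"
proof -
  assume "graph V E"
  then have "E \<subseteq> Pow V" "finite (Pow V)" unfolding graph_def by auto
  then show ?thesis by (rule finite_subset)
qed

lemma card_alg2_edges:
  assumes V: "finite V" and E: "finite E" and \<C>: "\<forall>X\<in>\<C>. X \<subseteq> V" and E': "alg2_edges E \<C> cnt E'"
  shows "card E' \<le> card V + 2 * (card \<C>)\<^sup>2"
proof -
  obtain S D where S: "\<And>X v. X \<in> \<C> \<Longrightarrow> v \<in> X \<Longrightarrow> card (S v) \<le> 1"
    and D: "\<And>X Y. X \<in> \<C> \<Longrightarrow> Y \<in> \<C> \<Longrightarrow> X \<noteq> Y \<Longrightarrow> pair_choice (delta E X Y) (D X Y)"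
    and E'_eq: "E' = (\<Union>X\<in>\<C>. \<Union>v\<in>X. S v) \<union> \<Union>{D X Y | X Y. X \<in> \<C> \<and> Y \<in> \<C> \<and> X \<noteq> Y}"
    using alg2_edges_choice[OF E'] by blast
  have "\<Union>\<C> \<subseteq> V" using \<C> by blast
  then have fin_U\<C>: "finite (\<Union>\<C>)" and card_U\<C>: "card (\<Union>\<C>) \<le> card V"
    using V by (auto intro: finite_subset card_mono)
  have "\<C> \<subseteq> Pow V" using \<C> by blast
  then have fin_\<C>: "finite \<C>" using V by (simp add: finite_subset)
  have "(\<Union>X\<in>\<C>. \<Union>v\<in>X. S v) = (\<Union>v\<in>\<Union>\<C>. S v)" by blast
  also have "card \<dots> \<le> (\<Sum>v\<in>\<Union>\<C>. card (S v))" using fin_U\<C> by (rule card_UN_le)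
  also have "\<dots> \<le> (\<Sum>v\<in>\<Union>\<C>. 1)" using S by (intro sum_mono) blast
  also have "\<dots> \<le> card V" using card_U\<C> by simp
  finally have within: "card (\<Union>X\<in>\<C>. \<Union>v\<in>X. S v) \<le> card V" .
  let ?I = "{(X, Y). X \<in> \<C> \<and> Y \<in> \<C> \<and> X \<noteq> Y}"
  have "?I \<subseteq> \<C> \<times> \<C>" by blast
  then have fin_I: "finite ?I" and card_I: "card ?I \<le> card \<C> * card \<C>"
    using fin_\<C> card_mono[of "\<C> \<times> \<C>" ?I] by (auto simp: finite_subset card_cartesian_product)
  have "{D X Y | X Y. X \<in> \<C> \<and> Y \<in> \<C> \<and> X \<noteq> Y} = (\<lambda>p. D (fst p) (snd p)) ` ?I"
    by (auto simp: image_def)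
  then have "\<Union>{D X Y | X Y. X \<in> \<C> \<and> Y \<in> \<C> \<and> X \<noteq> Y} = (\<Union>p\<in>?I. D (fst p) (snd p))"
    by simp
  also have "card \<dots> \<le> (\<Sum>p\<in>?I. card (D (fst p) (snd p)))" using fin_I by (rule card_UN_le)
  also have "\<dots> \<le> (\<Sum>p\<in>?I. 2)"
  proof (intro sum_mono)
    fix p assume "p \<in> ?I"
    then obtain X Y where "p = (X, Y)" "X \<in> \<C>" "Y \<in> \<C>" "X \<noteq> Y" by blast
    moreover have "finite (delta E X Y)" using E unfolding delta_def by simp
    ultimately show "card (D (fst p) (snd p)) \<le> 2" by (simp add: D pair_choice_card)
  qed
  also have "\<dots> \<le> 2 * (card \<C>)\<^sup>2" using card_I by (simp add: power2_eq_square)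
  finally have between: "card (\<Union>{D X Y | X Y. X \<in> \<C> \<and> Y \<in> \<C> \<and> X \<noteq> Y}) \<le> 2 * (card \<C>)\<^sup>2" .
  have "card E' \<le> card (\<Union>X\<in>\<C>. \<Union>v\<in>X. S v) + card (\<Union>{D X Y | X Y. X \<in> \<C> \<and> Y \<in> \<C> \<and> X \<noteq> Y})"
    unfolding E'_eq by (rule card_Un_le)
  with within between show ?thesis by linarith
qed

lemma card_alg2_output:
  assumes "graph V E" "clustering_based_spanner V E A \<beta> \<C> cnt" "alg2_output E \<C> cnt M A H"
  shows "card H \<le> card A + card M + card V + 2 * (card \<C>)\<^sup>2"
proof -
  obtain E' where E': "alg2_edges E \<C> cnt E'" and H: "H = E' \<union> M \<union> A"
    using assms(3) unfolding alg2_output_def by blast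
  have "\<forall>X\<in>\<C>. X \<subseteq> V" using assms(2) unfolding clustering_based_spanner_def clustering_def by simp
  moreover have "finite V" using assms(1) unfolding graph_def by simp
  ultimately have "card E' \<le> card V + 2 * (card \<C>)\<^sup>2"
    using card_alg2_edges graph_finite_edges[OF assms(1)] E' by blast
  moreover have "card H \<le> card E' + card M + card A" unfolding H
    by (meson add_le_mono card_Un_le le_refl order_trans)
  ultimately show ?thesis by linarith
qed

section \<open>Routes around a faulty edge\<close>

lemma shared_end_of_meeting_edges:
  assumes disj: "X \<inter> X' = {}" and ends: "y1 \<in> X" "y1' \<in> X'" "y2 \<in> X" "y2' \<in> X'"
    and "{y1, y1'} \<noteq> {y2, y2'}" "w \<in> {y1, y1'}" "w \<in> {y2, y2'}"
    and x: "x \<in> X" "x' \<in> X'" and meets: "{x, x'} \<inter> {y1, y1'} \<noteq> {}" "{x, x'} \<inter> {y2, y2'} \<noteq> {}"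
  shows "w = x \<or> w = x'"
proof (cases "w \<in> X")
  case True
  then have "w = y1" "w = y2" "y1' \<noteq> y2'" using assms by auto
  moreover have "x \<noteq> y1'" "x \<noteq> y2'" "x' \<noteq> w" using x ends True disj by auto
  ultimately show ?thesis using meets by auto
next
  case False
  then have "w = y1'" "w = y2'" "y1 \<noteq> y2" using assms by auto
  moreover have "x' \<noteq> y1" "x' \<noteq> y2" "x \<noteq> w" using x ends False disj by auto
  ultimately show ?thesis using meets by auto
qed

locale alg2_fault =
  fixes V :: "'a set" and E A M \<C> :: "'a set set" and cnt :: "'a \<Rightarrow> 'a"
    and \<alpha> :: real and \<beta> :: nat and H :: "'a set set" and e :: "'a set"
  assumes graph: "graph V E"
    and spanner: "clustering_based_spanner V E A \<beta> \<C> cnt"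
    and EFT: "mult_EFT_spanner V E M \<alpha>"
    and algorithm: "alg2_output E \<C> cnt M A H"
    and fault: "e \<in> E"
begin

text \<open>\<open>d u v\<close> is junk when \<open>u\<close> and \<open>v\<close> are disconnected in \<open>G\<close>; it is only used for connected pairs.\<close>

abbreviation d :: "'a \<Rightarrow> 'a \<Rightarrow> int" where
  "d u v \<equiv> int (the_enat (gdist E u v))"

lemma gdist_A_le: "gdist A u v \<le> gdist E u v + enat \<beta>"
  using spanner unfolding clustering_based_spanner_def additive_spanner_def by simp

lemma A_subset_H: "A \<subseteq> H" and M_subset_H: "M \<subseteq> H"
  using algorithm unfolding alg2_output_def by auto

lemma unclustered_edge_in_A: "f \<in> E \<Longrightarrow> u \<in> f \<Longrightarrow> u \<notin> \<Union>\<C> \<Longrightarrow> f \<in> A"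
proof -
  have "\<forall>f\<in>E. (\<exists>u\<in>f. u \<notin> \<Union>\<C>) \<longrightarrow> f \<in> A"
    using spanner unfolding clustering_based_spanner_def by simp
  then show "f \<in> E \<Longrightarrow> u \<in> f \<Longrightarrow> u \<notin> \<Union>\<C> \<Longrightarrow> f \<in> A" by blast
qed

lemma center_edge_in_A: "v \<in> \<Union>\<C> \<Longrightarrow> v \<noteq> cnt v \<Longrightarrow> {v, cnt v} \<in> A"
proof -
  have "\<forall>v\<in>\<Union>\<C>. v \<noteq> cnt v \<longrightarrow> {v, cnt v} \<in> A"
    using spanner unfolding clustering_based_spanner_def by simp
  then show "v \<in> \<Union>\<C> \<Longrightarrow> v \<noteq> cnt v \<Longrightarrow> {v, cnt v} \<in> A" by blast
qed

lemma clustered_path: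
  assumes "u \<in> V" "v \<in> \<Union>\<C>" "gdist E u v \<noteq> \<infinity>"
  obtains p where "is_path A p u v"
    "int (plen p) \<le> d u v + \<beta> - 2
     \<or> int (plen p) = d u v + \<beta> - 1 \<and> (v = cnt v \<or> last_edge_from p (cnt v))
     \<or> int (plen p) = d u v + \<beta> \<and> v \<noteq> cnt v \<and> last_edge_from p (cnt v)"
proof -
  have "\<forall>u\<in>V. \<forall>v\<in>\<Union>\<C>. gdist E u v \<noteq> \<infinity> \<longrightarrow> (\<exists>p. is_path A p u v \<and>
          (let d = int (the_enat (gdist E u v)); l = int (plen p) in
            l \<le> d + int \<beta> - 2
          \<or> (l = d + int \<beta> - 1 \<and> (v = cnt v \<or> last_edge_from p (cnt v)))
          \<or> (l = d + int \<beta> \<and> v \<noteq> cnt v \<and> last_edge_from p (cnt v))))"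
    using spanner unfolding clustering_based_spanner_def by (elim conjE)
  from this[rule_format, OF assms] show ?thesis using that unfolding Let_def by blast
qed

lemma spanner_clustering: "clustering V E \<C> cnt"
  using spanner unfolding clustering_based_spanner_def by simp

lemma cnt_in_cluster: "X \<in> \<C> \<Longrightarrow> v \<in> X \<Longrightarrow> cnt v \<in> X"
proof -
  have "\<forall>X\<in>\<C>. \<forall>v\<in>X. cnt v \<in> X" using spanner_clustering unfolding clustering_def by (elim conjE)
  then show "X \<in> \<C> \<Longrightarrow> v \<in> X \<Longrightarrow> cnt v \<in> X" by blast
qed

lemma cnt_eq: "X \<in> \<C> \<Longrightarrow> u \<in> X \<Longrightarrow> v \<in> X \<Longrightarrow> cnt u = cnt v"
proof -
  have "\<forall>X\<in>\<C>. \<forall>u\<in>X. \<forall>v\<in>X. cnt u = cnt v" using spanner_clustering unfolding clustering_def by (elim conjE)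
  then show "X \<in> \<C> \<Longrightarrow> u \<in> X \<Longrightarrow> v \<in> X \<Longrightarrow> cnt u = cnt v" by blast
qed

lemma clusters_disjoint: "X \<in> \<C> \<Longrightarrow> Y \<in> \<C> \<Longrightarrow> X \<noteq> Y \<Longrightarrow> X \<inter> Y = {}"
proof -
  have "\<forall>X\<in>\<C>. \<forall>Y\<in>\<C>. X \<noteq> Y \<longrightarrow> X \<inter> Y = {}" using spanner_clustering unfolding clustering_def by (elim conjE)
  then show "X \<in> \<C> \<Longrightarrow> Y \<in> \<C> \<Longrightarrow> X \<noteq> Y \<Longrightarrow> X \<inter> Y = {}" by blast
qed

lemma fault_ends: obtains a b where "e = {a, b}" "a \<noteq> b"
proof -
  have "e \<in> {{u, v} | u v. u \<in> V \<and> v \<in> V \<and> u \<noteq> v}" using fault graph unfolding graph_def by blast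
  then show ?thesis using that by blast
qed

lemma edge_ends: "{x, y} \<in> E \<Longrightarrow> x \<in> V \<and> y \<in> V \<and> x \<noteq> y"
proof -
  assume "{x, y} \<in> E"
  then obtain u v where "{x, y} = {u, v}" "u \<in> V" "v \<in> V" "u \<noteq> v"
    using graph unfolding graph_def by blast
  then show ?thesis by (auto simp: doubleton_eq_iff)
qed

text \<open>What survives the fault of the paths (P1)--(P3) from \<open>u\<close> to \<open>x\<close>: a path of length
  \<open>d u x + \<beta> - 2\<close> to \<open>x\<close>, or one of length \<open>d u x + \<beta> - 1\<close> to the center of \<open>x\<close> followed
  by the center edge of \<open>x\<close>.\<close>

definition tight_route :: "'a \<Rightarrow> 'a \<Rightarrow> bool" where
  "tight_route u x \<longleftrightarrow> reach_le (A - {e}) u x (d u x + \<beta> - 2) \<or>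
     (reach_le (A - {e}) u (cnt x) (d u x + \<beta> - 1) \<and> (x = cnt x \<or> {cnt x, x} \<in> A - {e}))"

definition safe_route :: "'a \<Rightarrow> 'a \<Rightarrow> bool" where
  "safe_route u x \<longleftrightarrow> reach_le (A - {e}) u x (d u x + \<beta>) \<and> (x \<in> \<Union>\<C> \<longrightarrow> tight_route u x)"

definition crossing_route :: "'a \<Rightarrow> 'a \<Rightarrow> bool" where
  "crossing_route u x \<longleftrightarrow> (\<exists>y z k1 k2. y \<in> e \<and> z \<in> e \<and> y \<noteq> z \<and>
     reach_le (A - {e}) u y k1 \<and> reach_le (A - {e}) z x k2 \<and> k1 + k2 + 1 \<le> d u x + \<beta>)"

lemma path_in_A_survives_or_crosses:
  assumes "is_path A p u x" "int (plen p) \<le> d u x + \<beta>"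
  shows "is_path (A - {e}) p u x \<or> reach_le (A - {e}) u x (d u x + \<beta> - 2) \<or> crossing_route u x"
proof -
  obtain a b where "e = {a, b}" "a \<noteq> b" by (rule fault_ends)
  from path_avoids_or_crosses[OF assms(1) this] show ?thesis
  proof (elim disjE)
    assume "reach_le (A - {e}) u x (int (plen p) - 2)"
    then have "reach_le (A - {e}) u x (d u x + \<beta> - 2)" by (rule reach_le_le) (use assms(2) in simp)
    then show ?thesis by blast
  next
    assume "\<exists>y z k1 k2. y \<in> e \<and> z \<in> e \<and> y \<noteq> z \<and> reach_le (A - {e}) u y k1 \<and>
       reach_le (A - {e}) z x k2 \<and> k1 + k2 + 1 \<le> int (plen p)"
    then have "crossing_route u x" unfolding crossing_route_def using assms(2) by force
    then show ?thesis by blast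
  qed blast
qed

lemma tight_route_of_path:
  assumes p: "is_path (A - {e}) p u x"
    and len: "int (plen p) \<le> d u x + \<beta> - 2
     \<or> int (plen p) = d u x + \<beta> - 1 \<and> (x = cnt x \<or> last_edge_from p (cnt x))
     \<or> int (plen p) = d u x + \<beta> \<and> x \<noteq> cnt x \<and> last_edge_from p (cnt x)"
  shows "tight_route u x"
proof -
  consider "int (plen p) \<le> d u x + \<beta> - 2"
    | "int (plen p) \<le> d u x + \<beta> - 1" "x = cnt x"
    | "int (plen p) \<le> d u x + \<beta>" "last_edge_from p (cnt x)"
    using len by linarith
  then show ?thesis
  proof cases
    case 1
    then show ?thesis unfolding tight_route_def using reach_le_le[OF reach_le_path[OF p]] by blast
  next
    case 2
    then show ?thesis unfolding tight_route_def using reach_le_le[OF reach_le_path[OF p]] by simp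
  next
    case 3
    from is_path_butlast[OF p 3(2)]
    have p': "is_path (A - {e}) (butlast p) u (cnt x)" "plen (butlast p) + 1 = plen p"
      and "{cnt x, x} \<in> A - {e}" by auto
    moreover have "reach_le (A - {e}) u (cnt x) (d u x + \<beta> - 1)"
      using reach_le_le[OF reach_le_path[OF p'(1)]] p'(2) 3(1) by simp
    ultimately show ?thesis unfolding tight_route_def by blast
  qed
qed

lemma safe_or_crossing:
  assumes u: "u \<in> V" and conn: "gdist E u x \<noteq> \<infinity>"
  shows "safe_route u x \<or> crossing_route u x"
proof (cases "x \<in> \<Union>\<C>")
  case True
  obtain p where p: "is_path A p u x" and len: "int (plen p) \<le> d u x + \<beta> - 2
     \<or> int (plen p) = d u x + \<beta> - 1 \<and> (x = cnt x \<or> last_edge_from p (cnt x))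
     \<or> int (plen p) = d u x + \<beta> \<and> x \<noteq> cnt x \<and> last_edge_from p (cnt x)"
    using clustered_path[OF u True conn] by blast
  have short: "int (plen p) \<le> d u x + \<beta>" using len by linarith
  from path_in_A_survives_or_crosses[OF p short] show ?thesis
  proof (elim disjE)
    assume p': "is_path (A - {e}) p u x"
    then have "reach_le (A - {e}) u x (d u x + \<beta>)" using reach_le_le[OF reach_le_path short] by blast
    then show ?thesis unfolding safe_route_def using tight_route_of_path[OF p' len] by blast
  next
    assume "reach_le (A - {e}) u x (d u x + \<beta> - 2)"
    then show ?thesis unfolding safe_route_def tight_route_def using reach_le_le by fastforce
  qed blast
next
  case False
  obtain n where n: "gdist E u x = enat n" using conn by auto
  then obtain m where "gdist A u x = enat m" "m \<le> n + \<beta>"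
    using gdist_A_le[of u x] by (cases "gdist A u x") auto
  then obtain p where p: "is_path A p u x" "int (plen p) \<le> d u x + \<beta>"
    using gdist_attained n by (metis enat.inject enat.simps(3) of_nat_add of_nat_mono the_enat.simps)
  from path_in_A_survives_or_crosses[OF p] show ?thesis
  proof (elim disjE)
    assume "is_path (A - {e}) p u x"
    then show ?thesis unfolding safe_route_def using False reach_le_le[OF reach_le_path p(2)] by blast
  next
    assume "reach_le (A - {e}) u x (d u x + \<beta> - 2)"
    then show ?thesis unfolding safe_route_def using False reach_le_le by fastforce
  qed blast
qed

lemma safe_route_refl:
  assumes "s \<in> V"
  shows "safe_route s s"
proof -
  have "gdist E s s = 0"
    using gdist_le_plen[OF is_path_singleton, of E s] by (simp add: plen_def flip: zero_enat_def)
  then have d0: "d s s = 0" by (simp add: zero_enat_def)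
  have "tight_route s s" if clustered: "s \<in> \<Union>\<C>"
  proof -
    obtain p where p: "is_path A p s s" and len: "int (plen p) \<le> d s s + \<beta> - 2
     \<or> int (plen p) = d s s + \<beta> - 1 \<and> (s = cnt s \<or> last_edge_from p (cnt s))
     \<or> int (plen p) = d s s + \<beta> \<and> s \<noteq> cnt s \<and> last_edge_from p (cnt s)"
      using clustered_path[OF assms clustered] gdist_le_plen[OF is_path_singleton, of E s] by force
    have long: "plen p \<ge> 2" if "s \<noteq> cnt s" "last_edge_from p (cnt s)"
    proof -
      have "p \<noteq> []" "hd p = s" "length p \<ge> 2" "p ! (length p - 2) = cnt s"
        using p that(2) unfolding is_path_def last_edge_from_def by auto
      then have "length p \<noteq> 2" using that(1) by (auto simp: hd_conv_nth)
      with \<open>length p \<ge> 2\<close> show ?thesis unfolding plen_def by simp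
    qed
    have "\<beta> \<ge> 2 \<or> (\<beta> \<ge> 1 \<and> s = cnt s)"
    proof (cases "s = cnt s")
      case False
      then show ?thesis using len d0 long[OF False] by auto
    qed (use len d0 in auto)
    then show ?thesis
      unfolding tight_route_def using d0 by (auto simp: reach_le_refl)
  qed
  then show ?thesis unfolding safe_route_def using d0 by (simp add: reach_le_refl)
qed

lemma crossing_routes_join:
  assumes "crossing_route s x" "crossing_route t x"
  shows "reach_le (A - {e}) s t (d s x + d t x + 2 * \<beta> - 2)"
proof -
  obtain a b where ab: "e = {a, b}" "a \<noteq> b" by (rule fault_ends)
  obtain y1 z1 k1 k2 where s: "y1 \<in> e" "z1 \<in> e" "y1 \<noteq> z1" "reach_le (A - {e}) s y1 k1"
      "reach_le (A - {e}) z1 x k2" "k1 + k2 + 1 \<le> d s x + \<beta>"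
    using assms(1) unfolding crossing_route_def by blast
  obtain y2 z2 k3 k4 where t: "y2 \<in> e" "z2 \<in> e" "y2 \<noteq> z2" "reach_le (A - {e}) t y2 k3"
      "reach_le (A - {e}) z2 x k4" "k3 + k4 + 1 \<le> d t x + \<beta>"
    using assms(2) unfolding crossing_route_def by blast
  show ?thesis
  proof (cases "y1 = y2")
    case True
    text \<open>Both routes enter \<open>e\<close> at the same endpoint: join them there.\<close>
    have "reach_le (A - {e}) y1 t k3" using reach_le_sym[OF t(4)] True by simp
    with s(4) have "reach_le (A - {e}) s t (k1 + k3)" by (rule reach_le_trans)
    moreover have "0 \<le> k2" "0 \<le> k4" using s(5) t(5) by (auto intro: reach_le_nonneg)
    ultimately show ?thesis using s(6) t(6) by (elim reach_le_le) linarith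
  next
    case False
    text \<open>Otherwise each route enters \<open>e\<close> at the endpoint where the other one leaves it:
      follow each route to \<open>x\<close> past \<open>e\<close>.\<close>
    then have "y1 = z2" "y2 = z1" using s(1-3) t(1-3) ab by auto
    then have "reach_le (A - {e}) s x (k1 + k4)" "reach_le (A - {e}) x t (k2 + k3)"
      using reach_le_trans[OF s(4)] t(5) reach_le_trans[OF reach_le_sym[OF s(5)]] reach_le_sym[OF t(4)]
      by auto
    then have "reach_le (A - {e}) s t (k1 + k4 + (k2 + k3))" by (rule reach_le_trans)
    then show ?thesis using s(6) t(6) by (elim reach_le_le) linarith
  qed
qed

lemma M_route_across_edge:
  assumes "{x, x'} \<in> E - {e}"
  obtains m where "reach_le (H - {e}) x x' m" "real_of_int m \<le> \<alpha>"
proof -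
  have "x \<in> V" "x' \<in> V" "x \<noteq> x'" using assms edge_ends by auto
  then have one: "gdist (E - {e}) x x' = 1" using assms by (intro gdist_edge) auto
  have "\<forall>s\<in>V. \<forall>t\<in>V. gdist (E - {e}) s t \<noteq> \<infinity> \<longrightarrow> gdist (M - {e}) s t \<noteq> \<infinity> \<and>
      real (the_enat (gdist (M - {e}) s t)) \<le> \<alpha> * real (the_enat (gdist (E - {e}) s t))"
    using EFT fault unfolding mult_EFT_spanner_def by blast
  from this[rule_format, OF \<open>x \<in> V\<close> \<open>x' \<in> V\<close>] one
  have "gdist (M - {e}) x x' \<noteq> \<infinity>" "real (the_enat (gdist (M - {e}) x x')) \<le> \<alpha>"
    by (auto simp: one_enat_def)
  moreover have "M - {e} \<subseteq> H - {e}" using M_subset_H by blast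
  ultimately show ?thesis
    using that reach_le_iff_gdist reach_le_mono by (metis of_int_of_nat_eq order_refl)
qed

definition faulty_center_edge :: "'a \<Rightarrow> bool" where
  "faulty_center_edge w \<longleftrightarrow> w \<noteq> cnt w \<and> e = {w, cnt w}"

lemma center_route_in_H:
  assumes "w \<in> \<Union>\<C>" "\<not> faulty_center_edge w"
  shows "reach_le (H - {e}) (cnt w) w 1"
proof (cases "w = cnt w")
  case False
  then have "{cnt w, w} \<in> H - {e}"
    using assms center_edge_in_A A_subset_H unfolding faulty_center_edge_def by (auto simp: insert_commute)
  then show ?thesis by (rule reach_le_edge)
qed (metis reach_le_refl zero_le_one)

text \<open>The hypotheses \<open>blocked1\<close> and \<open>blocked2\<close> say that the fault cuts the path
  \<open>cnt y, y, y', cnt y'\<close> between the two centers.\<close>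

lemma blocked_edges_share_end:
  assumes X: "X \<in> \<C>" "X' \<in> \<C>" "X \<noteq> X'"
    and ends: "y1 \<in> X" "y2 \<in> X" "y1' \<in> X'" "y2' \<in> X'" and distinct: "{y1, y1'} \<noteq> {y2, y2'}"
    and blocked1: "{y1, y1'} = e \<or> faulty_center_edge y1 \<or> faulty_center_edge y1'"
    and blocked2: "{y2, y2'} = e \<or> faulty_center_edge y2 \<or> faulty_center_edge y2'"
  shows "\<exists>w\<in>{y1, y1'} \<inter> {y2, y2'}. faulty_center_edge w"
proof -
  have disj: "X \<inter> X' = {}" using clusters_disjoint X by blast
  have center: "cnt w \<in> Z \<and> cnt (cnt w) = cnt w" if "Z \<in> \<C>" "w \<in> Z" for Z w
    using cnt_in_cluster cnt_eq that by metis
  have inside: "e \<subseteq> X \<or> e \<subseteq> X'" if "faulty_center_edge w" "w \<in> X \<or> w \<in> X'" for w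
    using that center X unfolding faulty_center_edge_def by blast
  have unique: "w = w'" if "faulty_center_edge w" "faulty_center_edge w'" "w \<in> X \<or> w \<in> X'"
    "w' \<in> X \<or> w' \<in> X'" for w w'
    using that center X unfolding faulty_center_edge_def by (metis doubleton_eq_iff)
  have cross: "\<not> ({y, y'} \<subseteq> X \<or> {y, y'} \<subseteq> X')" if "y \<in> X" "y' \<in> X'" for y y'
    using that disj by blast
  from blocked1 blocked2 ends show ?thesis
    using inside unique cross distinct by (smt (verit) IntI insert_iff)
qed

lemma alg2_pair_choice:
  assumes "X \<in> \<C>" "Y \<in> \<C>" "X \<noteq> Y"
  obtains D where "pair_choice (delta E X Y) D" "D \<subseteq> H"
proof -
  obtain E' where E': "alg2_edges E \<C> cnt E'" and H: "H = E' \<union> M \<union> A"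
    using algorithm unfolding alg2_output_def by blast
  obtain S D where "\<forall>X\<in>\<C>. \<forall>Y\<in>\<C>. X \<noteq> Y \<longrightarrow> pair_choice (delta E X Y) (D X Y)"
    and "E' = (\<Union>X\<in>\<C>. \<Union>v\<in>X. S v) \<union> \<Union>{D X Y | X Y. X \<in> \<C> \<and> Y \<in> \<C> \<and> X \<noteq> Y}"
    using alg2_edges_choice[OF E'] by blast
  moreover have "D X Y \<subseteq> \<Union>{D X Y | X Y. X \<in> \<C> \<and> Y \<in> \<C> \<and> X \<noteq> Y}" using assms by blast
  ultimately show ?thesis using that[of "D X Y"] assms H by blast
qed

text \<open>If the fault cut the paths through both edges stored between the two clusters, these edges
  would share an endpoint whose center edge is \<open>e\<close>; they are not disjoint, so both meet
  \<open>{x, x'}\<close>, which forces that endpoint to be \<open>x\<close> or \<open>x'\<close>.\<close>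

lemma centers_linked:
  assumes X: "X \<in> \<C>" "x \<in> X" and X': "X' \<in> \<C>" "x' \<in> X'" and xx': "{x, x'} \<in> E - {e}"
    and x: "x = cnt x \<or> {cnt x, x} \<in> A - {e}" and x': "x' = cnt x' \<or> {cnt x', x'} \<in> A - {e}"
  shows "reach_le (H - {e}) (cnt x) (cnt x') 3"
proof (cases "X = X'")
  case True
  then have "cnt x = cnt x'" using cnt_eq X X' by blast
  then show ?thesis by (simp add: reach_le_refl)
next
  case False
  have disj: "X \<inter> X' = {}" using clusters_disjoint X(1) X'(1) False by blast
  have x_ok: "\<not> faulty_center_edge x" and x'_ok: "\<not> faulty_center_edge x'"
    using x x' unfolding faulty_center_edge_def by (auto simp: insert_commute)
  have route: "reach_le (H - {e}) (cnt x) (cnt x') 3"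
    if y: "{y, y'} \<in> H" "y \<in> X" "y' \<in> X'" "{y, y'} \<noteq> e"
      "\<not> faulty_center_edge y" "\<not> faulty_center_edge y'" for y y'
  proof -
    have "cnt x = cnt y" "cnt x' = cnt y'" using cnt_eq X X' y(2,3) by blast+
    moreover have "reach_le (H - {e}) (cnt y) y 1" "reach_le (H - {e}) (cnt y') y' 1"
      using center_route_in_H X(1) X'(1) y(2,3,5,6) by blast+
    moreover have "reach_le (H - {e}) y y' 1" using y(1,4) by (intro reach_le_edge) blast
    ultimately have "reach_le (H - {e}) (cnt x) (cnt x') (1 + 1 + 1)"
      using reach_le_trans reach_le_sym by metis
    then show ?thesis by simp
  qed
  show ?thesis
  proof (rule ccontr)
    assume not_linked: "\<not> ?thesis"
    have blocked: "{y, y'} = e \<or> faulty_center_edge y \<or> faulty_center_edge y'"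
      if "{y, y'} \<in> H" "y \<in> X" "y' \<in> X'" for y y'
      using route[OF that] not_linked by blast
    obtain D where D: "pair_choice (delta E X X') D" "D \<subseteq> H"
      using alg2_pair_choice X(1) X'(1) False by blast
    have xx'_\<delta>: "{x, x'} \<in> delta E X X'" using xx' X X' unfolding delta_def by blast
    have "{} \<notin> delta E X X'" unfolding delta_def by blast
    from pair_choice_cases[OF D(1) this xx'_\<delta>] consider
        "{x, x'} \<in> D"
      | e1 e2 where "e1 \<in> delta E X X'" "e2 \<in> delta E X X'" "e1 \<in> D" "e2 \<in> D" "e1 \<noteq> e2"
          "e1 \<inter> e2 = {} \<or> {x, x'} \<inter> e1 \<noteq> {} \<and> {x, x'} \<inter> e2 \<noteq> {}"
      by blast
    then show False
    proof cases
      case 1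
      then have "{x, x'} \<in> H" using D(2) by blast
      then show False using blocked X(2) X'(2) xx' x_ok x'_ok by blast
    next
      case (2 e1 e2)
      obtain y1 y1' y2 y2' where ends: "y1 \<in> X" "y1' \<in> X'" "e1 = {y1, y1'}"
        "y2 \<in> X" "y2' \<in> X'" "e2 = {y2, y2'}"
        using 2(1,2) unfolding delta_def by blast
      have "e1 \<in> H" "e2 \<in> H" using 2(3,4) D(2) by blast+
      then have "{y1, y1'} = e \<or> faulty_center_edge y1 \<or> faulty_center_edge y1'"
        "{y2, y2'} = e \<or> faulty_center_edge y2 \<or> faulty_center_edge y2'"
        using blocked ends by blast+
      from blocked_edges_share_end[OF X(1) X'(1) False ends(1,4,2,5) _ this] 2(5) ends(3,6)
      obtain w where w: "w \<in> e1" "w \<in> e2" "faulty_center_edge w" by blast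
      have "w = x \<or> w = x'"
        using shared_end_of_meeting_edges[OF disj ends(1,2,4,5) _ _ _ X(2) X'(2)] 2(5,6) w(1,2) ends(3,6)
        by blast
      then show False using w(3) x_ok x'_ok by blast
    qed
  qed
qed

lemma reach_le_A_H: "reach_le (A - {e}) u v k \<Longrightarrow> reach_le (H - {e}) u v k"
  using A_subset_H by (elim reach_le_mono) auto

lemma safe_routes_join:
  assumes s: "safe_route s x" and t: "safe_route t x'" and xx': "{x, x'} \<in> E - {e}"
  obtains k where "reach_le (H - {e}) s t k"
    "real_of_int k \<le> real_of_int (d s x + d t x' + 1 + 2 * \<beta>) + max 2 (\<alpha> - 3)"
proof -
  have sx: "reach_le (A - {e}) s x (d s x + \<beta>)" and tx: "reach_le (A - {e}) x' t (d t x' + \<beta>)"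
    using s t unfolding safe_route_def by (auto intro: reach_le_sym)
  have x: "reach_le (A - {e}) s x (d s x + \<beta> - 2) \<or>
      reach_le (A - {e}) s (cnt x) (d s x + \<beta> - 1) \<and> (x = cnt x \<or> {cnt x, x} \<in> A - {e})"
    if "x \<in> \<Union>\<C>"
    using s that unfolding safe_route_def tight_route_def by blast
  have x': "reach_le (A - {e}) x' t (d t x' + \<beta> - 2) \<or>
      reach_le (A - {e}) (cnt x') t (d t x' + \<beta> - 1) \<and> (x' = cnt x' \<or> {cnt x', x'} \<in> A - {e})"
    if "x' \<in> \<Union>\<C>"
    using t that unfolding safe_route_def tight_route_def by (auto intro: reach_le_sym)
  consider (unclustered) "x \<notin> \<Union>\<C> \<or> x' \<notin> \<Union>\<C>"
    | (short) "reach_le (A - {e}) s x (d s x + \<beta> - 2) \<or> reach_le (A - {e}) x' t (d t x' + \<beta> - 2)"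
    | (centers) "x \<in> \<Union>\<C>" "x' \<in> \<Union>\<C>"
        "reach_le (A - {e}) s (cnt x) (d s x + \<beta> - 1)" "x = cnt x \<or> {cnt x, x} \<in> A - {e}"
        "reach_le (A - {e}) (cnt x') t (d t x' + \<beta> - 1)" "x' = cnt x' \<or> {cnt x', x'} \<in> A - {e}"
    using x x' by blast
  then show ?thesis
  proof cases
    case unclustered
    then have "{x, x'} \<in> A - {e}" using unclustered_edge_in_A xx' by blast
    then have "reach_le (A - {e}) s t (d s x + \<beta> + 1 + (d t x' + \<beta>))"
      by (rule reach_le_trans[OF reach_le_trans[OF sx reach_le_edge] tx])
    then show ?thesis by (rule that[OF reach_le_A_H]) simp
  next
    case short
    text \<open>One side is two shorter than allowed, which pays for the detour through \<open>M\<close>.\<close>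
    obtain m where m: "reach_le (H - {e}) x x' m" "real_of_int m \<le> \<alpha>"
      using M_route_across_edge[OF xx'] by blast
    from short have "reach_le (H - {e}) s t (d s x + \<beta> + m + (d t x' + \<beta>) - 2)"
    proof
      assume "reach_le (A - {e}) s x (d s x + \<beta> - 2)"
      from reach_le_trans[OF reach_le_trans[OF reach_le_A_H[OF this] m(1)] reach_le_A_H[OF tx]]
      show ?thesis by (simp add: algebra_simps)
    next
      assume "reach_le (A - {e}) x' t (d t x' + \<beta> - 2)"
      from reach_le_trans[OF reach_le_trans[OF reach_le_A_H[OF sx] m(1)] reach_le_A_H[OF this]]
      show ?thesis by (simp add: algebra_simps)
    qed
    then show ?thesis by (rule that) (use m(2) in simp)
  next
    case centers
    obtain X X' where "X \<in> \<C>" "x \<in> X" "X' \<in> \<C>" "x' \<in> X'" using centers(1,2) by blast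
    from centers_linked[OF this xx' centers(4,6)]
    have "reach_le (H - {e}) s t (d s x + \<beta> - 1 + 3 + (d t x' + \<beta> - 1))"
      by (rule reach_le_trans[OF reach_le_trans[OF reach_le_A_H[OF centers(3)]] reach_le_A_H[OF centers(5)]])
    then show ?thesis by (rule that) simp
  qed
qed

lemma stretch_along_path:
  assumes P: "is_path (E - {e}) P s t" and s: "s \<in> V"
  obtains k where "reach_le (H - {e}) s t k"
    "real_of_int k \<le> real (plen P) + 2 * real \<beta> + max 2 (\<alpha> - 3)"
proof -
  define L where "L = plen P"
  have len: "length P = Suc L" using P unfolding is_path_def plen_def L_def by (cases P) auto
  have P0: "P ! 0 = s" and PL: "P ! L = t"
    using P len unfolding is_path_def by (auto simp: hd_conv_nth last_conv_nth)
  have edge: "{P ! j, P ! Suc j} \<in> E - {e}" if "j < L" for j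
    using P that len unfolding is_path_def by simp
  have in_V: "P ! j \<in> V" if "j \<le> L" for j
    using is_path_nth_in_vertices[OF graph _ P s] that len by auto
  have from_s: "gdist E s (P ! j) \<noteq> \<infinity> \<and> d s (P ! j) \<le> j" if "j \<le> L" for j
  proof -
    have "reach_le (E - {e}) s (P ! j) j" using reach_le_path_nth[OF P] that len by simp
    then have "reach_le E s (P ! j) j" by (rule reach_le_mono) auto
    then show ?thesis unfolding reach_le_iff_gdist .
  qed
  have from_t: "gdist E t (P ! j) \<noteq> \<infinity> \<and> d t (P ! j) \<le> L - j" if "j \<le> L" for j
  proof -
    have "reach_le (E - {e}) (P ! j) t (L - j)" using reach_le_path_nth[OF P] that len L_def by simp
    then have "reach_le E (P ! j) t (L - j)" by (rule reach_le_mono) auto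
    then have "reach_le E t (P ! j) (L - j)" by (rule reach_le_sym)
    then show ?thesis unfolding reach_le_iff_gdist by simp
  qed
  have t: "t \<in> V" using in_V[of L] PL by simp
  show ?thesis
  proof (cases "safe_route s t")
    case True
    then have "reach_le (H - {e}) s t (d s t + \<beta>)" unfolding safe_route_def by (blast intro: reach_le_A_H)
    moreover have "d s t \<le> L" using from_s[of L] PL by simp
    ultimately show ?thesis using that unfolding L_def by fastforce
  next
    case False
    text \<open>Walk along \<open>P\<close> to the last vertex that \<open>s\<close> still reaches safely.\<close>
    have "\<exists>j<L. (\<forall>i\<le>j. \<not> \<not> safe_route s (P ! i)) \<and> \<not> safe_route s (P ! Suc j)"
      by (rule ex_least_nat_less) (use False PL safe_route_refl[OF s] P0 in auto)
    then obtain j where j: "j < L" "safe_route s (P ! j)" "\<not> safe_route s (P ! Suc j)" by auto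
    then have crossing_s: "crossing_route s (P ! Suc j)"
      using safe_or_crossing[OF s] from_s[of "Suc j"] by auto
    have "safe_route t (P ! Suc j) \<or> crossing_route t (P ! Suc j)"
      using safe_or_crossing[OF t] from_t[of "Suc j"] j(1) by simp
    then show ?thesis
    proof
      assume "safe_route t (P ! Suc j)"
      from safe_routes_join[OF j(2) this edge[OF j(1)]] obtain k where
        "reach_le (H - {e}) s t k"
        "real_of_int k \<le> real_of_int (d s (P ! j) + d t (P ! Suc j) + 1 + 2 * \<beta>) + max 2 (\<alpha> - 3)"
        by blast
      moreover have "d s (P ! j) + d t (P ! Suc j) + 1 \<le> L"
        using from_s[of j] from_t[of "Suc j"] j(1) by simp
      ultimately show ?thesis using that unfolding L_def by fastforce
    next
      assume "crossing_route t (P ! Suc j)"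
      with crossing_s have "reach_le (H - {e}) s t (d s (P ! Suc j) + d t (P ! Suc j) + 2 * \<beta> - 2)"
        by (intro reach_le_A_H crossing_routes_join)
      moreover have "d s (P ! Suc j) + d t (P ! Suc j) \<le> L"
        using from_s[of "Suc j"] from_t[of "Suc j"] j(1) by simp
      ultimately show ?thesis using that unfolding L_def by fastforce
    qed
  qed
qed

lemma additive_fault_tolerance:
  assumes "s \<in> V" "gdist (E - {e}) s t \<noteq> \<infinity>"
  shows "gdist (H - {e}) s t \<noteq> \<infinity> \<and>
    real (the_enat (gdist (H - {e}) s t))
      \<le> real (the_enat (gdist (E - {e}) s t)) + 2 * real \<beta> + max 2 (\<alpha> - 3)"
proof -
  obtain P where P: "is_path (E - {e}) P s t" "gdist (E - {e}) s t = enat (plen P)"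
    using gdist_attained[OF assms(2)] by blast
  obtain k where "reach_le (H - {e}) s t k" "real_of_int k \<le> real (plen P) + 2 * real \<beta> + max 2 (\<alpha> - 3)"
    using stretch_along_path[OF P(1) assms(1)] by blast
  then show ?thesis using P(2) unfolding reach_le_iff_gdist by force
qed

end

theorem theorem3:
  shows "(\<exists>c::real. \<forall>(V::'a set) E A M \<C> cnt (\<alpha>::real) (\<beta>::nat) H.
            graph V E \<and> clustering_based_spanner V E A \<beta> \<C> cnt \<and>
            mult_EFT_spanner V E M \<alpha> \<and> alg2_output E \<C> cnt M A H \<longrightarrow>
            real (card H) \<le> c * real (card A + card M + card V + (card \<C>)\<^sup>2))
       \<and> (\<forall>(V::'a set) E A M \<C> cnt (\<alpha>::real) (\<beta>::nat) H.
            graph V E \<and> clustering_based_spanner V E A \<beta> \<C> cnt \<and>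
            mult_EFT_spanner V E M \<alpha> \<and> alg2_output E \<C> cnt M A H \<longrightarrow>
            (\<forall>e\<in>E. \<forall>s\<in>V. \<forall>t\<in>V. gdist (E - {e}) s t \<noteq> \<infinity> \<longrightarrow>
               gdist (H - {e}) s t \<noteq> \<infinity> \<and>
               real (the_enat (gdist (H - {e}) s t))
                 \<le> real (the_enat (gdist (E - {e}) s t)) + 2 * real \<beta> + max 2 (\<alpha> - 3)))"
proof (intro conjI[OF exI[of _ 2]] allI impI ballI)
  fix V :: "'a set" and E A M \<C> cnt \<alpha> \<beta> H
  assume "graph V E \<and> clustering_based_spanner V E A \<beta> \<C> cnt \<and>
    mult_EFT_spanner V E M \<alpha> \<and> alg2_output E \<C> cnt M A H"
  then have "card H \<le> card A + card M + card V + 2 * (card \<C>)\<^sup>2"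
    using card_alg2_output by blast
  then have "card H \<le> 2 * (card A + card M + card V + (card \<C>)\<^sup>2)" by (rule order.trans) simp
  then have "real (card H) \<le> real (2 * (card A + card M + card V + (card \<C>)\<^sup>2))"
    by (simp only: of_nat_le_iff)
  then show "real (card H) \<le> 2 * real (card A + card M + card V + (card \<C>)\<^sup>2)"
    by simp
next
  fix V :: "'a set" and E A M \<C> cnt \<alpha> \<beta> H e s t
  assume "graph V E \<and> clustering_based_spanner V E A \<beta> \<C> cnt \<and>
    mult_EFT_spanner V E M \<alpha> \<and> alg2_output E \<C> cnt M A H" "e \<in> E" "s \<in> V" "t \<in> V"
    "gdist (E - {e}) s t \<noteq> \<infinity>"
  then interpret alg2_fault V E A M \<C> cnt \<alpha> \<beta> H e by unfold_locales blast+
  show "gdist (H - {e}) s t \<noteq> \<infinity> \<and>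
    real (the_enat (gdist (H - {e}) s t))
      \<le> real (the_enat (gdist (E - {e}) s t)) + 2 * real \<beta> + max 2 (\<alpha> - 3)"
    using additive_fault_tolerance \<open>s \<in> V\<close> \<open>gdist (E - {e}) s t \<noteq> \<infinity>\<close> by blast
qed

end
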